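(* Let $S=\{\pi_1,\pi_2,\pi_3\}$ be a linearly dependent set of three non-trivial permutations with $|\pi_1|\ge|\pi_2|\ge|\pi_3|$. If $|\pi_1|>3$, then $|\pi_2|=|\pi_3|=2$.
   Context: A $k$-permutation is a bijection of $[k]=\{1,\dots,k\}$; $|\pi|$ denotes its order, and a permutation is non-trivial if its order is at least two. The gradient polynomial of a $k$-permutation $\pi$ is $P_\pi(\alpha,\beta)=k!\sum_{m\in[k]}\left(\frac{k-m}{1-\alpha}-\frac{m-1}{\alpha}\right)\left(\frac{k-\pi(m)}{1-\beta}-\frac{\pi(m)-1}{\beta}\right)\frac{\alpha^{m-1}(1-\alpha)^{k-m}\beta^{\pi(m)-1}(1-\beta)^{k-\pi(m)}}{(m-1)!(k-m)!(\pi(m)-1)!(k-\pi(m))!}$. A set $S$ of (distinct) permutations is linearly dependent if the gradient polynomials $P_\pi$, $\pi\in S$, are linearly dependent over $\mathbb{R}$. *)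

theory Defs
  imports Complex_Main
begin

text \<open>A k-permutation is represented in one-line notation as a list
  [pi(1), ..., pi(k)] which is a bijection of {1..k}.  Its order |pi| is k,
  the length of the list; pi(m) is the (m-1)-th list entry.\<close>

definition is_perm :: "nat list \<Rightarrow> bool" where
  "is_perm p \<longleftrightarrow> distinct p \<and> set p = {1..length p}"

definition perm_order :: "nat list \<Rightarrow> nat" where
  "perm_order p = length p"

definition perm_app :: "nat list \<Rightarrow> nat \<Rightarrow> nat" where
  "perm_app p m = p ! (m - 1)"

definition nontrivial_perm :: "nat list \<Rightarrow> bool" where
  "nontrivial_perm p \<longleftrightarrow> is_perm p \<and> perm_order p \<ge> 2"

definition grad_poly :: "nat list \<Rightarrow> real \<Rightarrow> real \<Rightarrow> real" where
  "grad_poly p \<alpha> \<beta> =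
     (let k = perm_order p in
      fact k * (\<Sum>m\<in>{1..k}.
        ((real k - real m) / (1 - \<alpha>) - (real m - 1) / \<alpha>) *
        ((real k - real (perm_app p m)) / (1 - \<beta>) - (real (perm_app p m) - 1) / \<beta>) *
        (\<alpha> ^ (m - 1) * (1 - \<alpha>) ^ (k - m) * \<beta> ^ (perm_app p m - 1) * (1 - \<beta>) ^ (k - perm_app p m)) /
        (fact (m - 1) * fact (k - m) * fact (perm_app p m - 1) * fact (k - perm_app p m))))"

text \<open>Two polynomials coincide iff they agree
  on the open square (0,1)^2, where the displayed rational expression is defined;
  so we test the linear relation there.\<close>

definition lin_dependent_perms :: "nat list set \<Rightarrow> bool" where
  "lin_dependent_perms S \<longleftrightarrow>
     (\<exists>c :: nat list \<Rightarrow> real. (\<exists>p\<in>S. c p \<noteq> 0) \<and>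
        (\<forall>\<alpha> \<beta>. 0 < \<alpha> \<and> \<alpha> < 1 \<and> 0 < \<beta> \<and> \<beta> < 1 \<longrightarrow>
           (\<Sum>p\<in>S. c p * grad_poly p \<alpha> \<beta>) = 0))"

end

theory Submission
  imports Defs "HOL-Analysis.Analysis"
begin

text \<open>The gradient polynomial of a \<open>k\<close>-permutation \<open>\<pi>\<close> is the mixed derivative
  \<open>d\<^sup>2/dx dy\<close> of \<open>F\<^sub>\<pi>(x,y) = k! \<Sum>\<^sub>m b\<^sub>m(x) b\<^sub>\<pi>\<^sub>m(y)\<close>, where
  \<open>b\<^sub>m(x) = x^(m-1) (1-x)^(k-m) / ((m-1)! (k-m)!)\<close> is a scaled Bernstein polynomial. A linear
  relation among gradient polynomials therefore makes \<open>H = \<Sum> c\<^sub>\<pi> F\<^sub>\<pi>\<close> separable,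
  \<open>H(x,y) = f(x) + g(y)\<close>, and since every \<open>F\<^sub>\<pi>\<close> integrates to \<open>1/(k-1)!\<close> in either
  variable, \<open>H\<close> is constant on the unit square.

  After raising all Bernstein polynomials to the degree of the longest permutation, the
  coefficient matrix of \<open>H\<close> in the product basis is constant. An alternating functional on its
  rows annihilates every shorter permutation, so a unique longest permutation has coefficient
  zero; and at most three distinct permutation matrices of a size exceeding their number are
  linearly independent modulo constants. In the remaining case \<open>|\<pi>\<^sub>1| = |\<pi>\<^sub>2| > |\<pi>\<^sub>3|\<close>
  the first, last and second rows of the matrix cannot be constant away from the entries of
  \<open>\<pi>\<^sub>1\<close> and \<open>\<pi>\<^sub>2\<close>.\<close>

text \<open>\<open>(k-1)! * bern k m\<close> is the Bernstein polynomial of degree \<open>k-1\<close> and index \<open>m-1\<close>.\<close>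

definition bern :: "nat \<Rightarrow> nat \<Rightarrow> real \<Rightarrow> real" where
  "bern k m x = x^(m-1) * (1-x)^(k-m) / (fact (m-1) * fact (k-m))"

definition bern_deriv :: "nat \<Rightarrow> nat \<Rightarrow> real \<Rightarrow> real" where
  "bern_deriv k m x = ((real m - 1)/x - (real k - real m)/(1-x)) * bern k m x"

lemma sum_atLeast1_atMost_shift:
  "k \<ge> 1 \<Longrightarrow> (\<Sum>m\<in>{1..k}. f m) = (\<Sum>j\<le>k-1. f (Suc j))"
proof -
  assume "k \<ge> 1"
  then have "{1..k} = {Suc 0..Suc (k-1)}" by simp
  then show ?thesis by (simp only: sum.atLeast_Suc_atMost_Suc_shift atLeast0AtMost o_def)
qed

lemma sum_bern: assumes "k \<ge> 1" shows "(\<Sum>m\<in>{1..k}. bern k m x) = 1 / fact (k-1)"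
proof -
  have "(\<Sum>m\<in>{1..k}. bern k m x) = (\<Sum>j\<le>k-1. bern k (Suc j) x)"
    using assms by (rule sum_atLeast1_atMost_shift)
  also have "\<dots> = (\<Sum>j\<le>k-1. of_nat ((k-1) choose j) * x^j * (1-x)^(k-1-j)) / fact (k-1)"
    unfolding sum_divide_distrib
  proof (rule sum.cong[OF refl])
    fix j assume "j \<in> {..k-1}"
    then have j: "j \<le> k-1" by simp
    have "k - Suc j = k - 1 - j" by simp
    then show "bern k (Suc j) x = of_nat ((k-1) choose j) * x^j * (1-x)^(k-1-j) / fact (k-1)"
      unfolding bern_def using j by (simp add: binomial_fact field_simps)
  qed
  also have "\<dots> = (x + (1-x))^(k-1) / fact (k-1)"
    by (subst binomial_ring) simp
  finally show ?thesis by simp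
qed

lemma real_of_nat_times_power_pred: "(x::real) \<noteq> 0 \<Longrightarrow> real n * x^(n-1) = real n * x^n / x"
  by (cases n) auto

lemma bern_has_real_derivative:
  assumes "1 \<le> m" "m \<le> k" "0 < x" "x < 1"
  shows "(bern k m has_real_derivative bern_deriv k m x) (at x)"
proof -
  have d: "((\<lambda>x. x^(m-1) * (1-x)^(k-m)) has_real_derivative
      (real (m-1) * x^(m-1-1) * (1-x)^(k-m) + x^(m-1) * (real (k-m) * (1-x)^(k-m-1) * (-1)))) (at x)"
    by (auto intro!: derivative_eq_intros)
  have e1: "real (m-1) * x^(m-1-1) = (real m - 1) / x * x^(m-1)"
    using assms real_of_nat_times_power_pred[of x "m-1"] by (simp add: of_nat_diff)
  have e2: "real (k-m) * (1-x)^(k-m-1) = (real k - real m) / (1-x) * (1-x)^(k-m)"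
    using assms real_of_nat_times_power_pred[of "1-x" "k-m"] by (simp add: of_nat_diff)
  have "real (m-1) * x^(m-1-1) * (1-x)^(k-m) + x^(m-1) * (real (k-m) * (1-x)^(k-m-1) * (-1))
       = ((real m - 1)/x - (real k - real m)/(1-x)) * (x^(m-1) * (1-x)^(k-m))"
    unfolding e1 mult.assoc[symmetric] e2 using assms by (simp add: field_simps)
  with d have "((\<lambda>x. x^(m-1) * (1-x)^(k-m)) has_real_derivative
      ((real m - 1)/x - (real k - real m)/(1-x)) * (x^(m-1) * (1-x)^(k-m))) (at x)" by simp
  from DERIV_cdivide[OF this, of "fact (m-1) * fact (k-m)"] show ?thesis
    unfolding bern_def[abs_def] bern_deriv_def by (simp add: bern_def)
qed

lemma has_integral_spike_open_01:
  assumes "(f has_integral y) {0..1::real}" "\<And>t. 0 < t \<Longrightarrow> t < 1 \<Longrightarrow> g t = f t"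
  shows "(g has_integral y) {0..1}"
  using has_integral_spike_interior[of f y 0 1 g] assms by (auto simp: cbox_interval box_real)

lemma bern_has_integral: assumes "1 \<le> n" "n \<le> k"
  shows "(bern k n has_integral 1 / fact k) {0..1}"
proof -
  have B: "((\<lambda>t. t powr (real n - 1) * (1 - t) powr (real (k - n + 1) - 1)) has_integral
        Beta (real n) (real (k - n + 1))) {0..1}"
    using assms by (intro has_integral_Beta_real) auto
  have g1: "Gamma (real n) = fact (n - 1)"
    using Gamma_fact[of "n-1", where 'a=real] assms by (simp add: of_nat_diff)
  have g2: "Gamma (real (k - n + 1)) = fact (k - n)"
    using Gamma_fact[of "k-n", where 'a=real] by (simp add: add.commute)
  have g3: "Gamma (real n + real (k - n + 1)) = fact k"
    using Gamma_fact[of "k", where 'a=real] assms by (simp add: of_nat_diff add.commute)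
  have "Beta (real n) (real (k - n + 1)) = fact (n-1) * fact (k-n) / fact k"
    unfolding Beta_def g1 g2 g3 ..
  with B have B': "((\<lambda>t. t powr (real n - 1) * (1 - t) powr (real (k - n + 1) - 1)
        / (fact (n-1) * fact (k-n))) has_integral 1 / fact k) {0..1}"
    using has_integral_divide[OF B, of "fact (n-1) * fact (k-n)"] by simp
  show ?thesis
  proof (rule has_integral_spike_open_01[OF B'])
    fix t :: real assume "0 < t" "t < 1"
    then have "t powr (real n - 1) = t ^ (n - 1)" "(1 - t) powr (real (k - n + 1) - 1) = (1-t)^(k-n)"
      using assms by (auto simp: powr_realpow[symmetric] of_nat_diff)
    then show "bern k n t = t powr (real n - 1) * (1 - t) powr (real (k - n + 1) - 1)
        / (fact (n-1) * fact (k-n))"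
      unfolding bern_def by simp
  qed
qed

lemma bern_at_ratio:
  assumes "t > 0" "1 \<le> b" "b \<le> k"
  shows "bern k b (t / (1 + t)) = t^(b-1) / (fact (b-1) * fact (k-b)) / (1+t)^(k-1)"
proof -
  have "1 - t / (1 + t) = 1 / (1 + t)" using assms by (simp add: field_simps)
  then have "bern k b (t / (1 + t)) = t^(b-1) / ((1+t)^(b-1) * (1+t)^(k-b)) / (fact (b-1) * fact (k-b))"
    unfolding bern_def by (simp add: power_divide)
  also have "(1+t)^(b-1) * (1+t)^(k-b) = (1+t)^(k-1)"
    using assms by (simp add: power_add[symmetric])
  finally show ?thesis by simp
qed

text \<open>Substituting \<open>y = t/(1+t)\<close> turns a combination of the basis into a polynomial in \<open>t\<close>
  vanishing on \<open>(0,1)\<close>.\<close>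

lemma bern_lin_indep:
  assumes k: "k \<ge> 1" and h: "\<And>y. 0 < y \<Longrightarrow> y < 1 \<Longrightarrow> (\<Sum>b\<in>{1..k}. a b * bern k b y) = 0"
    and b: "b \<in> {1..k}"
  shows "a b = 0"
proof -
  define cc where "cc i = a (Suc i) / (fact i * fact (k - Suc i))" for i
  have z: "(\<Sum>i\<le>k-1. cc i * t^i) = 0" if t: "0 < t" "t < 1" for t :: real
  proof -
    have y: "0 < t / (1 + t)" "t / (1 + t) < 1" using t by (auto simp: field_simps)
    have "0 = (\<Sum>b\<in>{1..k}. a b * bern k b (t / (1 + t)))" using h[OF y] by simp
    also have "\<dots> = (\<Sum>b\<in>{1..k}. a b * (t^(b-1) / (fact (b-1) * fact (k-b)))) / (1+t)^(k-1)"
      unfolding sum_divide_distrib by (rule sum.cong[OF refl]) (use t bern_at_ratio in auto)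
    also have "(\<Sum>b\<in>{1..k}. a b * (t^(b-1) / (fact (b-1) * fact (k-b)))) = (\<Sum>i\<le>k-1. cc i * t^i)"
      unfolding sum_atLeast1_atMost_shift[OF k] cc_def by simp
    finally show ?thesis using t by simp
  qed
  have "{0<..<1::real} \<subseteq> {t. (\<Sum>i\<le>k-1. cc i * t^i) = 0}" using z by auto
  moreover have "infinite {0<..<1::real}" by simp
  ultimately have "infinite {t::real. (\<Sum>i\<le>k-1. cc i * t^i) = 0}" using finite_subset by blast
  then have "\<forall>i\<le>k-1. cc i = 0" using polyfun_finite_roots[of cc "k-1"] by auto
  then have "cc (b-1) = 0" using b by auto
  then show ?thesis using b unfolding cc_def by simp
qed

lemma bern_combination_const:
  assumes k: "k \<ge> 1" and h: "\<And>y. 0 < y \<Longrightarrow> y < 1 \<Longrightarrow> (\<Sum>b\<in>{1..k}. a b * bern k b y) = C"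
    and b: "b \<in> {1..k}"
  shows "a b = C * fact (k-1)"
proof -
  have "(\<Sum>b\<in>{1..k}. (a b - C * fact (k-1)) * bern k b y) = 0" if "0 < y" "y < 1" for y
  proof -
    have "(\<Sum>b\<in>{1..k}. (a b - C * fact (k-1)) * bern k b y)
        = (\<Sum>b\<in>{1..k}. a b * bern k b y) - C * fact (k-1) * (\<Sum>b\<in>{1..k}. bern k b y)"
      by (simp add: algebra_simps sum_subtractf sum_distrib_left)
    also have "\<dots> = 0" using h[OF that] sum_bern[OF k] by simp
    finally show ?thesis .
  qed
  from bern_lin_indep[OF k this b] show ?thesis by simp
qed

text \<open>\<open>elev k k' b z\<close> is the coefficient of \<open>bern k b\<close> in \<open>bern k' z\<close>, obtained by multiplying
  with \<open>(y + (1 - y))\<^bsup>k-k'\<^esup>\<close>.\<close>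

definition elev :: "nat \<Rightarrow> nat \<Rightarrow> nat \<Rightarrow> nat \<Rightarrow> real" where
  "elev k k' b z = (if z \<le> b \<and> b \<le> z + (k - k') then
      real ((k - k') choose (b - z)) * fact (b - 1) * fact (k - b) / (fact (z - 1) * fact (k' - z))
    else 0)"

lemma bern_degree_elevation:
  assumes "1 \<le> z" "z \<le> k'" "k' \<le> k"
  shows "bern k' z y = (\<Sum>b\<in>{1..k}. elev k k' b z * bern k b y)"
proof -
  define d where "d = k - k'"
  have "bern k' z y = (y + (1 - y))^d * bern k' z y" by simp
  also have "\<dots> = (\<Sum>i\<le>d. real (d choose i) * y^i * (1-y)^(d-i) * bern k' z y)"
    unfolding binomial_ring sum_distrib_right by simp
  also have "\<dots> = (\<Sum>i\<le>d. elev k k' (i + z) z * bern k (i + z) y)"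
  proof (rule sum.cong[OF refl])
    fix i assume "i \<in> {..d}"
    then have i: "i \<le> d" by simp
    have e1: "i + z - 1 = i + (z - 1)" using assms by simp
    have e2: "k - (i + z) = (d - i) + (k' - z)" using assms i unfolding d_def by simp
    have "elev k k' (i + z) z
        = real (d choose i) * fact (i + z - 1) * fact (k - (i + z)) / (fact (z - 1) * fact (k' - z))"
      unfolding elev_def d_def[symmetric] using i by simp
    then show "real (d choose i) * y^i * (1-y)^(d-i) * bern k' z y = elev k k' (i + z) z * bern k (i + z) y"
      unfolding bern_def e1 e2 by (simp add: power_add field_simps)
  qed
  also have "\<dots> = (\<Sum>b\<in>{z..d+z}. elev k k' b z * bern k b y)"
    using sum.shift_bounds_cl_nat_ivl[of "\<lambda>b. elev k k' b z * bern k b y" 0 z d]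
    by (simp add: atLeast0AtMost)
  also have "\<dots> = (\<Sum>b\<in>{1..k}. elev k k' b z * bern k b y)"
    by (rule sum.mono_neutral_left) (use assms in \<open>auto simp: elev_def d_def\<close>)
  finally show ?thesis .
qed

lemma elev_same: assumes "1 \<le> z" "z \<le> k" shows "elev k k b z = (if b = z then 1 else 0)"
  using assms unfolding elev_def by auto

lemma elev_nonneg: "elev k k' b z \<ge> 0"
  unfolding elev_def by auto

lemma elev_pos: assumes "z \<le> b" "b \<le> z + (k - k')" shows "elev k k' b z > 0"
  using assms unfolding elev_def by auto

lemma elev_eq_0: assumes "\<not> (z \<le> b \<and> b \<le> z + (k - k'))" shows "elev k k' b z = 0"
  using assms unfolding elev_def by auto

lemma perm_app_in_range:
  assumes "is_perm p" "m \<in> {1..length p}"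
  shows "perm_app p m \<in> {1..length p}"
proof -
  have "p ! (m-1) \<in> set p" using assms(2) by auto
  then show ?thesis using assms(1) unfolding is_perm_def perm_app_def by simp
qed

lemma inj_on_perm_app: assumes "is_perm p" shows "inj_on (perm_app p) {1..length p}"
proof (rule inj_onI)
  fix a b assume a: "a \<in> {1..length p}" and b: "b \<in> {1..length p}" and e: "perm_app p a = perm_app p b"
  have "distinct p" using assms unfolding is_perm_def by simp
  have "a - 1 < length p" "b - 1 < length p" using a b by auto
  then have "a - 1 = b - 1"
    using e nth_eq_iff_index_eq[OF \<open>distinct p\<close>] unfolding perm_app_def by blast
  then show "a = b" using a b by (simp only: atLeastAtMost_iff) arith
qed

lemma bij_betw_perm_app: assumes "is_perm p" shows "bij_betw (perm_app p) {1..length p} {1..length p}"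
proof -
  have "perm_app p ` {1..length p} \<subseteq> {1..length p}" using perm_app_in_range[OF assms] by auto
  moreover have "card (perm_app p ` {1..length p}) = card {1..length p}"
    using card_image[OF inj_on_perm_app[OF assms]] .
  ultimately have "perm_app p ` {1..length p} = {1..length p}"
    by (simp add: card_subset_eq)
  then show ?thesis using inj_on_perm_app[OF assms] by (simp add: bij_betw_def)
qed

lemma sum_perm_app_reindex: assumes "is_perm p"
  shows "(\<Sum>m\<in>{1..length p}. f (perm_app p m)) = (\<Sum>n\<in>{1..length p}. f n)"
  using sum.reindex_bij_betw[OF bij_betw_perm_app[OF assms], of f] by simp

lemma perm_app_differ:
  assumes "length q1 = length q2" "q1 \<noteq> q2"
  obtains m where "m \<in> {1..length q1}" "perm_app q1 m \<noteq> perm_app q2 m"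
proof -
  have "q1 ! i = q2 ! i" if "i < length q1" "\<forall>m\<in>{1..length q1}. perm_app q1 m = perm_app q2 m" for i
    using that(2)[rule_format, of "Suc i"] that(1) by (simp add: perm_app_def)
  then show ?thesis using that assms by (metis nth_equalityI)
qed

definition perm_poly :: "nat list \<Rightarrow> real \<Rightarrow> real \<Rightarrow> real" where
  "perm_poly p x y = fact (length p) *
     (\<Sum>m\<in>{1..length p}. bern (length p) m x * bern (length p) (perm_app p m) y)"

definition perm_poly_dx :: "nat list \<Rightarrow> real \<Rightarrow> real \<Rightarrow> real" where
  "perm_poly_dx p x y = fact (length p) *
     (\<Sum>m\<in>{1..length p}. bern_deriv (length p) m x * bern (length p) (perm_app p m) y)"

lemma grad_poly_eq: "grad_poly p x y = fact (length p) *
     (\<Sum>m\<in>{1..length p}. bern_deriv (length p) m x * bern_deriv (length p) (perm_app p m) y)"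
  unfolding grad_poly_def perm_order_def Let_def
proof (rule arg_cong[where f="\<lambda>u. fact (length p) * u"], rule sum.cong[OF refl])
  have regroup: "(-a) * (-b) * (p * q * r * s) / (f1 * f2 * f3 * f4)
      = (a * (p * q / (f1 * f2))) * (b * (r * s / (f3 * f4)))" for a b p q r s f1 f2 f3 f4 :: real
    by (simp add: times_divide_times_eq mult_ac)
  fix m
  let ?k = "length p" and ?n = "perm_app p m"
  have "(real ?k - real m) / (1 - x) - (real m - 1) / x = - ((real m - 1)/x - (real ?k - real m)/(1-x))"
    "(real ?k - real ?n) / (1 - y) - (real ?n - 1) / y = - ((real ?n - 1)/y - (real ?k - real ?n)/(1-y))"
    by simp_all
  then show "((real ?k - real m) / (1 - x) - (real m - 1) / x) *
        ((real ?k - real ?n) / (1 - y) - (real ?n - 1) / y) *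
        (x ^ (m - 1) * (1 - x) ^ (?k - m) * y ^ (?n - 1) * (1 - y) ^ (?k - ?n)) /
        (fact (m - 1) * fact (?k - m) * fact (?n - 1) * fact (?k - ?n)) =
        bern_deriv ?k m x * bern_deriv ?k ?n y"
    unfolding bern_deriv_def bern_def by (simp only: regroup)
qed

lemma perm_poly_has_derivative_x: assumes "0 < x" "x < 1"
  shows "((\<lambda>x. perm_poly p x y) has_real_derivative perm_poly_dx p x y) (at x)"
  unfolding perm_poly_def perm_poly_dx_def
  by (intro DERIV_sum DERIV_cmult DERIV_cmult_right bern_has_real_derivative assms) auto

lemma perm_poly_dx_has_derivative_y: assumes "is_perm p" "0 < y" "y < 1"
  shows "((\<lambda>y. perm_poly_dx p x y) has_real_derivative grad_poly p x y) (at y)"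
  unfolding perm_poly_dx_def grad_poly_eq
  by (intro DERIV_sum DERIV_cmult bern_has_real_derivative assms)
     (use perm_app_in_range[OF assms(1)] in auto)

lemma perm_poly_has_integral_y: assumes "is_perm p" "length p \<ge> 1"
  shows "((\<lambda>y. perm_poly p x y) has_integral 1 / fact (length p - 1)) {0..1}"
proof -
  let ?k = "length p"
  have "((\<lambda>y. perm_poly p x y) has_integral
      fact ?k * (\<Sum>m\<in>{1..?k}. bern ?k m x * (1 / fact ?k))) {0..1}"
    unfolding perm_poly_def
    by (intro has_integral_mult_right has_integral_sum bern_has_integral finite_atLeastAtMost)
       (use perm_app_in_range[OF assms(1)] in auto)
  moreover have "fact ?k * (\<Sum>m\<in>{1..?k}. bern ?k m x * (1 / fact ?k)) = (1::real) / fact (?k - 1)"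
    using sum_bern[OF assms(2), of x] by (simp add: sum_divide_distrib[symmetric])
  ultimately show ?thesis by simp
qed

lemma perm_poly_has_integral_x: assumes "is_perm p" "length p \<ge> 1"
  shows "((\<lambda>x. perm_poly p x y) has_integral 1 / fact (length p - 1)) {0..1}"
proof -
  let ?k = "length p"
  have "((\<lambda>x. perm_poly p x y) has_integral
      fact ?k * (\<Sum>m\<in>{1..?k}. (1 / fact ?k) * bern ?k (perm_app p m) y)) {0..1}"
    unfolding perm_poly_def
    by (intro has_integral_mult_right has_integral_sum has_integral_mult_left bern_has_integral
        finite_atLeastAtMost) auto
  moreover have "fact ?k * (\<Sum>m\<in>{1..?k}. (1 / fact ?k) * bern ?k (perm_app p m) y)
      = fact ?k * (1 / fact ?k) * (\<Sum>m\<in>{1..?k}. bern ?k (perm_app p m) y)"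
    by (simp add: sum_distrib_left)
  moreover have "(\<Sum>m\<in>{1..?k}. bern ?k (perm_app p m) y) = (\<Sum>n\<in>{1..?k}. bern ?k n y)"
    by (rule sum_perm_app_reindex[OF assms(1)])
  ultimately show ?thesis using sum_bern[OF assms(2), of y] by simp
qed

definition comb_poly :: "nat list set \<Rightarrow> (nat list \<Rightarrow> real) \<Rightarrow> real \<Rightarrow> real \<Rightarrow> real" where
  "comb_poly S c x y = (\<Sum>p\<in>S. c p * perm_poly p x y)"

definition const_on_square :: "(real \<Rightarrow> real \<Rightarrow> real) \<Rightarrow> bool" where
  "const_on_square f \<longleftrightarrow> (\<exists>C. \<forall>x y. 0 < x \<longrightarrow> x < 1 \<longrightarrow> 0 < y \<longrightarrow> y < 1 \<longrightarrow> f x y = C)"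

lemma comb_poly_remove:
  assumes "finite S" "c p = 0"
  shows "comb_poly (S - {p}) c = comb_poly S c"
  using assms by (auto simp: comb_poly_def sum_diff1 fun_eq_iff)

lemma comb_poly_has_integral_y: assumes "finite S" "\<forall>p\<in>S. is_perm p \<and> length p \<ge> 1"
  shows "((\<lambda>y. comb_poly S c x y) has_integral (\<Sum>p\<in>S. c p * (1 / fact (length p - 1)))) {0..1}"
  unfolding comb_poly_def using assms
  by (intro has_integral_sum has_integral_mult_right perm_poly_has_integral_y) auto

lemma comb_poly_has_integral_x: assumes "finite S" "\<forall>p\<in>S. is_perm p \<and> length p \<ge> 1"
  shows "((\<lambda>x. comb_poly S c x y) has_integral (\<Sum>p\<in>S. c p * (1 / fact (length p - 1)))) {0..1}"
  unfolding comb_poly_def using assms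
  by (intro has_integral_sum has_integral_mult_right perm_poly_has_integral_x) auto

lemma has_real_derivative_0_imp_eq_on_01:
  assumes "\<And>x. 0 < x \<Longrightarrow> x < 1 \<Longrightarrow> (f has_real_derivative 0) (at x)"
    and "0 < a" "a < 1" "0 < b" "b < 1"
  shows "f a = (f b :: real)"
proof -
  obtain C where "\<forall>x\<in>{0<..<1}. f x = C"
    using has_field_derivative_zero_constant[of "{0<..<1::real}" f] assms(1)
    by (auto intro: has_field_derivative_at_within)
  then show ?thesis using assms(2-5) by simp
qed

lemma has_integral_0_imp_const_0:
  assumes "(f has_integral 0) {0..1::real}" "\<And>t. 0 < t \<Longrightarrow> t < 1 \<Longrightarrow> f t = K"
  shows "K = 0"
proof -
  have "((\<lambda>t. K) has_integral K) {0..1::real}"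
    using has_integral_const_real[of K 0 1] by simp
  then have "(f has_integral K) {0..1::real}"
    by (rule has_integral_spike_open_01) (use assms(2) in auto)
  then show ?thesis using has_integral_unique assms(1) by blast
qed

lemma comb_poly_separable:
  assumes fin: "finite S" and perms: "\<forall>p\<in>S. is_perm p"
    and rel: "\<And>x y. 0 < x \<Longrightarrow> x < 1 \<Longrightarrow> 0 < y \<Longrightarrow> y < 1 \<Longrightarrow> (\<Sum>p\<in>S. c p * grad_poly p x y) = 0"
    and xy: "0 < x" "x < 1" "0 < y" "y < 1"
  shows "comb_poly S c x y = comb_poly S c x (1/2) + comb_poly S c (1/2) y - comb_poly S c (1/2) (1/2)"
proof -
  define H where "H = comb_poly S c"
  define Hx where "Hx u v = (\<Sum>p\<in>S. c p * perm_poly_dx p u v)" for u v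
  have Hx_dy: "((\<lambda>v. Hx u v) has_real_derivative 0) (at v)"
    if "0 < u" "u < 1" "0 < v" "v < 1" for u v
  proof -
    have "((\<lambda>v. Hx u v) has_real_derivative (\<Sum>p\<in>S. c p * grad_poly p u v)) (at v)"
      unfolding Hx_def using perms that by (intro DERIV_sum DERIV_cmult perm_poly_dx_has_derivative_y) auto
    then show ?thesis using rel[OF that] by simp
  qed
  have H_dx: "((\<lambda>u. H u v) has_real_derivative Hx u v) (at u)" if "0 < u" "u < 1" for u v
    unfolding H_def comb_poly_def Hx_def using that
    by (intro DERIV_sum DERIV_cmult perm_poly_has_derivative_x) auto
  have "((\<lambda>u. H u y - H u (1/2)) has_real_derivative 0) (at u)" if "0 < u" "u < 1" for u
  proof -
    have "Hx u y = Hx u (1/2)"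
      by (rule has_real_derivative_0_imp_eq_on_01) (use Hx_dy that xy in auto)
    then show ?thesis using DERIV_diff[OF H_dx[OF that, of y] H_dx[OF that, of "1/2"]] by simp
  qed
  then have "H x y - H x (1/2) = H (1/2) y - H (1/2) (1/2)"
    by (rule has_real_derivative_0_imp_eq_on_01) (use xy in auto)
  then show ?thesis unfolding H_def by simp
qed

lemma comb_poly_const_on_square:
  assumes fin: "finite S" and perms: "\<forall>p\<in>S. is_perm p \<and> length p \<ge> 1"
    and rel: "\<And>x y. 0 < x \<Longrightarrow> x < 1 \<Longrightarrow> 0 < y \<Longrightarrow> y < 1 \<Longrightarrow> (\<Sum>p\<in>S. c p * grad_poly p x y) = 0"
  shows "const_on_square (comb_poly S c)"
proof -
  define H where "H = comb_poly S c"
  have sep: "H u v = H u (1/2) + H (1/2) v - H (1/2) (1/2)"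
    if "0 < u" "u < 1" "0 < v" "v < 1" for u v
    unfolding H_def by (rule comb_poly_separable[OF fin]) (use perms rel that in auto)
  let ?I = "\<Sum>p\<in>S. c p * (1 / fact (length p - 1))"
  have "H x y = H (1/2) (1/2)" if xy: "0 < x" "x < 1" "0 < y" "y < 1" for x y
  proof -
    have "H x (1/2) - H (1/2) (1/2) = 0"
    proof (rule has_integral_0_imp_const_0)
      show "((\<lambda>t. H x t - H (1/2) t) has_integral 0) {0..1}"
        using has_integral_diff[OF comb_poly_has_integral_y[OF fin perms, where c=c and x=x]
            comb_poly_has_integral_y[OF fin perms, where c=c and x="1/2"]]
        unfolding H_def by simp
      show "H x t - H (1/2) t = H x (1/2) - H (1/2) (1/2)" if "0 < t" "t < 1" for t
        using sep[of x t] xy that by simp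
    qed
    moreover have "H (1/2) y - H (1/2) (1/2) = 0"
    proof (rule has_integral_0_imp_const_0)
      show "((\<lambda>t. H t y - H t (1/2)) has_integral 0) {0..1}"
        using has_integral_diff[OF comb_poly_has_integral_x[OF fin perms, where c=c and y=y]
            comb_poly_has_integral_x[OF fin perms, where c=c and y="1/2"]]
        unfolding H_def by simp
      show "H t y - H t (1/2) = H (1/2) y - H (1/2) (1/2)" if "0 < t" "t < 1" for t
        using sep[of t y] xy that by simp
    qed
    ultimately show ?thesis using sep[OF xy] by simp
  qed
  then show ?thesis unfolding const_on_square_def H_def by blast
qed

definition perm_coeff :: "nat list \<Rightarrow> nat \<Rightarrow> nat \<Rightarrow> nat \<Rightarrow> real" where
  "perm_coeff p k m b = fact (length p) *
     (\<Sum>j\<in>{1..length p}. elev k (length p) m j * elev k (length p) b (perm_app p j))"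

definition comb_coeff :: "nat list set \<Rightarrow> (nat list \<Rightarrow> real) \<Rightarrow> nat \<Rightarrow> nat \<Rightarrow> nat \<Rightarrow> real" where
  "comb_coeff S c k m b = (\<Sum>p\<in>S. c p * perm_coeff p k m b)"

lemma perm_poly_bern_expansion:
  assumes "is_perm p" "1 \<le> length p" "length p \<le> k"
  shows "perm_poly p x y = (\<Sum>m\<in>{1..k}. \<Sum>b\<in>{1..k}. bern k m x * bern k b y * perm_coeff p k m b)"
proof -
  let ?k = "length p"
  have "perm_poly p x y = fact ?k * (\<Sum>j\<in>{1..?k}. (\<Sum>m\<in>{1..k}. elev k ?k m j * bern k m x) *
        (\<Sum>b\<in>{1..k}. elev k ?k b (perm_app p j) * bern k b y))"
    unfolding perm_poly_def
    by (rule arg_cong[where f="\<lambda>u. fact ?k * u"], rule sum.cong[OF refl])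
       (use assms perm_app_in_range[OF assms(1)] bern_degree_elevation in auto)
  also have "\<dots> = fact ?k * (\<Sum>j\<in>{1..?k}. \<Sum>m\<in>{1..k}. \<Sum>b\<in>{1..k}.
        bern k m x * bern k b y * (elev k ?k m j * elev k ?k b (perm_app p j)))"
    by (simp add: sum_product mult_ac)
  also have "\<dots> = fact ?k * (\<Sum>m\<in>{1..k}. \<Sum>b\<in>{1..k}. \<Sum>j\<in>{1..?k}.
        bern k m x * bern k b y * (elev k ?k m j * elev k ?k b (perm_app p j)))"
    by (subst sum.swap, subst (2) sum.swap) simp
  also have "\<dots> = (\<Sum>m\<in>{1..k}. \<Sum>b\<in>{1..k}. bern k m x * bern k b y * perm_coeff p k m b)"
    unfolding perm_coeff_def by (simp add: sum_distrib_left mult_ac)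
  finally show ?thesis .
qed

lemma comb_poly_bern_expansion:
  assumes "finite S" "\<forall>p\<in>S. is_perm p \<and> 1 \<le> length p \<and> length p \<le> k"
  shows "comb_poly S c x y = (\<Sum>m\<in>{1..k}. bern k m x * (\<Sum>b\<in>{1..k}. comb_coeff S c k m b * bern k b y))"
proof -
  have "comb_poly S c x y = (\<Sum>p\<in>S. \<Sum>m\<in>{1..k}. \<Sum>b\<in>{1..k}. c p * (bern k m x * bern k b y * perm_coeff p k m b))"
    unfolding comb_poly_def sum_distrib_left[symmetric]
    by (rule sum.cong[OF refl]) (use assms perm_poly_bern_expansion in auto)
  also have "\<dots> = (\<Sum>m\<in>{1..k}. \<Sum>b\<in>{1..k}. \<Sum>p\<in>S. c p * (bern k m x * bern k b y * perm_coeff p k m b))"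
    by (subst sum.swap, subst (2) sum.swap) simp
  also have "\<dots> = (\<Sum>m\<in>{1..k}. bern k m x * (\<Sum>b\<in>{1..k}. comb_coeff S c k m b * bern k b y))"
    unfolding comb_coeff_def sum_distrib_left sum_distrib_right by (simp add: mult_ac)
  finally show ?thesis .
qed

lemma comb_coeff_const:
  assumes fin: "finite S" and perms: "\<forall>p\<in>S. is_perm p \<and> 1 \<le> length p \<and> length p \<le> k"
    and k: "k \<ge> 1" and const: "const_on_square (comb_poly S c)"
  obtains C where "\<And>m b. m \<in> {1..k} \<Longrightarrow> b \<in> {1..k} \<Longrightarrow> comb_coeff S c k m b = C"
proof -
  obtain C where H: "\<And>x y. 0 < x \<Longrightarrow> x < 1 \<Longrightarrow> 0 < y \<Longrightarrow> y < 1 \<Longrightarrow> comb_poly S c x y = C"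
    using const unfolding const_on_square_def by blast
  have row: "(\<Sum>b\<in>{1..k}. comb_coeff S c k m b * bern k b y) = C * fact (k-1)"
    if "m \<in> {1..k}" "0 < y" "y < 1" for m y
  proof (rule bern_combination_const[OF k _ that(1), where a="\<lambda>m. \<Sum>b\<in>{1..k}. comb_coeff S c k m b * bern k b y"])
    fix x :: real assume "0 < x" "x < 1"
    then show "(\<Sum>m\<in>{1..k}. (\<Sum>b\<in>{1..k}. comb_coeff S c k m b * bern k b y) * bern k m x) = C"
      using H[of x y] that comb_poly_bern_expansion[OF fin perms, of c x y] by (simp add: mult_ac)
  qed
  have "comb_coeff S c k m b = C * fact (k-1) * fact (k-1)" if "m \<in> {1..k}" "b \<in> {1..k}" for m b
    by (rule bern_combination_const[OF k _ that(2)]) (use row that in auto)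
  then show ?thesis using that by blast
qed

lemma perm_coeff_same_length:
  assumes "is_perm p" "length p = k" "m \<in> {1..k}" "b \<in> {1..k}"
  shows "perm_coeff p k m b = fact k * (if perm_app p m = b then 1 else 0)"
proof -
  have "(\<Sum>j\<in>{1..k}. elev k k m j * elev k k b (perm_app p j))
      = (\<Sum>j\<in>{1..k}. if j = m then (if perm_app p j = b then 1 else 0) else 0)"
  proof (rule sum.cong[OF refl])
    fix j assume j: "j \<in> {1..k}"
    then have "perm_app p j \<in> {1..k}" using perm_app_in_range[OF assms(1)] assms(2) by auto
    then show "elev k k m j * elev k k b (perm_app p j) = (if j = m then (if perm_app p j = b then 1 else 0) else 0)"
      using j elev_same[of j k m] elev_same[of "perm_app p j" k b] by auto
  qed
  also have "\<dots> = (if perm_app p m = b then 1 else 0)" using assms(3) by (simp add: sum.delta')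
  finally show ?thesis using assms(2) unfolding perm_coeff_def by simp
qed

lemma perm_coeff_first_row:
  assumes "is_perm p" "length p = k'" "1 \<le> k'" "k' \<le> k"
  shows "perm_coeff p k 1 b = fact k' * (fact (k-1) / fact (k'-1)) * elev k k' b (perm_app p 1)"
proof -
  have "elev k k' 1 j = (if j = 1 then fact (k-1) / fact (k'-1) else 0)" if "j \<in> {1..k'}" for j
    using that assms unfolding elev_def by auto
  then have "(\<Sum>j\<in>{1..k'}. elev k k' 1 j * elev k k' b (perm_app p j))
      = (\<Sum>j\<in>{1..k'}. if j = 1 then fact (k-1) / fact (k'-1) * elev k k' b (perm_app p j) else 0)"
    by (intro sum.cong) auto
  then show ?thesis using assms unfolding perm_coeff_def by (simp add: sum.delta')
qed

lemma perm_coeff_last_row: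
  assumes "is_perm p" "length p = k'" "1 \<le> k'" "k' \<le> k"
  shows "perm_coeff p k k b = fact k' * (fact (k-1) / fact (k'-1)) * elev k k' b (perm_app p k')"
proof -
  have "elev k k' k j = (if j = k' then fact (k-1) / fact (k'-1) else 0)" if "j \<in> {1..k'}" for j
    using that assms unfolding elev_def by (cases "j = k'") auto
  then have "(\<Sum>j\<in>{1..k'}. elev k k' k j * elev k k' b (perm_app p j))
      = (\<Sum>j\<in>{1..k'}. if j = k' then fact (k-1) / fact (k'-1) * elev k k' b (perm_app p j) else 0)"
    by (intro sum.cong) auto
  then show ?thesis using assms unfolding perm_coeff_def by (simp add: sum.delta')
qed

lemma perm_coeff_second_row:
  assumes "is_perm p" "length p = k'" "k = k' + 1" "k' \<ge> 2"
  shows "perm_coeff p k 2 b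
    = fact k' * (elev k k' b (perm_app p 1) + real (k-2) * elev k k' b (perm_app p 2))"
proof -
  have e: "Suc (k - 3) = k - 2" using assms by simp
  have "fact (k - 2) = real (k-2) * fact (k - 3)"
    using fact_Suc[of "k-3", where 'a=real] unfolding e .
  then have "elev k k' 2 j = (if j = 1 then 1 else if j = 2 then real (k - 2) else 0)" if "j \<in> {1..k'}" for j
    using that assms unfolding elev_def by (auto simp: numeral_3_eq_3 numeral_2_eq_2)
  then have "(\<Sum>j\<in>{1..k'}. elev k k' 2 j * elev k k' b (perm_app p j))
      = (\<Sum>j\<in>{1..k'}. (if j = 1 then elev k k' b (perm_app p j) else 0)
          + (if j = 2 then real (k-2) * elev k k' b (perm_app p j) else 0))"
    by (intro sum.cong) auto
  then show ?thesis using assms unfolding perm_coeff_def by (simp add: sum.distrib sum.delta')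
qed

text \<open>Up to the factor \<open>(k-1)!\<close> these are alternating binomial coefficients, so they annihilate
  constants and every column of \<open>elev\<close> coming from a lower degree.\<close>

definition alt_weight :: "nat \<Rightarrow> nat \<Rightarrow> real" where
  "alt_weight k m = (-1)^(m-1) / (fact (m-1) * fact (k-m))"

lemma sum_alt_weight: assumes "k \<ge> 2" shows "(\<Sum>m\<in>{1..k}. alt_weight k m) = 0"
proof -
  have "(\<Sum>m\<in>{1..k}. alt_weight k m) = (\<Sum>i\<le>k-1. alt_weight k (Suc i))"
    using assms by (intro sum_atLeast1_atMost_shift) auto
  also have "\<dots> = (\<Sum>i\<le>k-1. (-1)^i * real ((k-1) choose i)) / fact (k-1)"
    unfolding sum_divide_distrib
  proof (rule sum.cong[OF refl])
    fix i assume "i \<in> {..k-1}"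
    then have i: "i \<le> k-1" by simp
    have "k - Suc i = k - 1 - i" by simp
    then show "alt_weight k (Suc i) = (-1)^i * real ((k-1) choose i) / fact (k-1)"
      unfolding alt_weight_def using i by (simp add: binomial_fact field_simps)
  qed
  also have "(\<Sum>i\<le>k-1. (-1)^i * real ((k-1) choose i)) = 0"
    using assms by (intro choose_alternating_sum) auto
  finally show ?thesis by simp
qed

lemma sum_alt_weight_elev: assumes "k' < k" "1 \<le> j" "j \<le> k'"
  shows "(\<Sum>m\<in>{1..k}. alt_weight k m * elev k k' m j) = 0"
proof -
  define d where "d = k - k'"
  have d: "d \<ge> 1" using assms unfolding d_def by simp
  have "(\<Sum>m\<in>{1..k}. alt_weight k m * elev k k' m j) = (\<Sum>m\<in>{j..d+j}. alt_weight k m * elev k k' m j)"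
    by (rule sum.mono_neutral_right) (use assms in \<open>auto simp: elev_def d_def\<close>)
  also have "\<dots> = (\<Sum>i\<le>d. alt_weight k (i+j) * elev k k' (i+j) j)"
    using sum.shift_bounds_cl_nat_ivl[of "\<lambda>m. alt_weight k m * elev k k' m j" 0 j d]
    by (simp add: atLeast0AtMost)
  also have "\<dots> = (\<Sum>i\<le>d. ((-1)^i * real (d choose i)) * ((-1)^(j-1) / (fact (j-1) * fact (k'-j))))"
  proof (rule sum.cong[OF refl])
    fix i assume "i \<in> {..d}"
    then have i: "i \<le> d" by simp
    have e1: "i + j - 1 = i + (j - 1)" using assms by simp
    have "elev k k' (i+j) j = real (d choose i) * fact (i + j - 1) * fact (k - (i+j)) / (fact (j-1) * fact (k'-j))"
      unfolding elev_def d_def[symmetric] using i by simp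
    then show "alt_weight k (i+j) * elev k k' (i+j) j
        = ((-1)^i * real (d choose i)) * ((-1)^(j-1) / (fact (j-1) * fact (k'-j)))"
      unfolding alt_weight_def e1 by (simp add: power_add field_simps)
  qed
  also have "\<dots> = (\<Sum>i\<le>d. (-1)^i * real (d choose i)) * ((-1)^(j-1) / (fact (j-1) * fact (k'-j)))"
    by (rule sum_distrib_right[symmetric])
  also have "(\<Sum>i\<le>d. (-1)^i * real (d choose i)) = 0" using d by (intro choose_alternating_sum) auto
  finally show ?thesis by simp
qed

lemma sum_alt_weight_perm_coeff_shorter:
  assumes "length p < k"
  shows "(\<Sum>m\<in>{1..k}. alt_weight k m * perm_coeff p k m b) = 0"
proof -
  let ?l = "length p"
  have "(\<Sum>m\<in>{1..k}. alt_weight k m * perm_coeff p k m b) = fact ?l *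
      (\<Sum>m\<in>{1..k}. \<Sum>j\<in>{1..?l}. alt_weight k m * elev k ?l m j * elev k ?l b (perm_app p j))"
    unfolding perm_coeff_def by (simp add: sum_distrib_left mult_ac)
  also have "\<dots> = fact ?l *
      (\<Sum>j\<in>{1..?l}. \<Sum>m\<in>{1..k}. alt_weight k m * elev k ?l m j * elev k ?l b (perm_app p j))"
    by (subst sum.swap) simp
  also have "\<dots> = fact ?l *
      (\<Sum>j\<in>{1..?l}. (\<Sum>m\<in>{1..k}. alt_weight k m * elev k ?l m j) * elev k ?l b (perm_app p j))"
    by (simp only: sum_distrib_right)
  also have "\<dots> = 0"
    using assms sum_alt_weight_elev by simp
  finally show ?thesis .
qed

lemma sum_alt_weight_perm_coeff_same_length:
  assumes "is_perm p" "length p = k" "k \<ge> 1"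
  shows "(\<Sum>m\<in>{1..k}. alt_weight k m * perm_coeff p k m (perm_app p 1)) = real k"
proof -
  have b: "perm_app p 1 \<in> {1..k}" using perm_app_in_range[OF assms(1), of 1] assms by auto
  have "alt_weight k m * perm_coeff p k m (perm_app p 1) = (if m = 1 then fact k * alt_weight k 1 else 0)"
    if "m \<in> {1..k}" for m
  proof -
    have "perm_app p m = perm_app p 1 \<longleftrightarrow> m = 1"
      using inj_onD[OF inj_on_perm_app[OF assms(1)], of m 1] that assms by auto
    then show ?thesis using perm_coeff_same_length[OF assms(1,2) that b] by auto
  qed
  then have "(\<Sum>m\<in>{1..k}. alt_weight k m * perm_coeff p k m (perm_app p 1))
      = (\<Sum>m\<in>{1..k}. if m = 1 then fact k * alt_weight k 1 else 0)"
    by (rule sum.cong[OF refl])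
  also have "\<dots> = fact k / fact (k - 1)" using assms by (simp add: alt_weight_def)
  also have "fact k / fact (k - 1) = real k"
  proof -
    have "fact k = real k * fact (k - 1)" by (rule fact_reduce) (use assms in simp)
    then show ?thesis by simp
  qed
  finally show ?thesis .
qed

lemma longest_perm_coeff_eq_0:
  assumes fin: "finite S" and perms: "\<forall>p\<in>S. is_perm p \<and> 1 \<le> length p"
    and p0: "p0 \<in> S" "2 \<le> length p0" and shorter: "\<forall>p\<in>S - {p0}. length p < length p0"
    and const: "const_on_square (comb_poly S c)"
  shows "c p0 = 0"
proof -
  define k where "k = length p0"
  have perms': "\<forall>p\<in>S. is_perm p \<and> 1 \<le> length p \<and> length p \<le> k"
  proof
    fix p assume "p \<in> S"
    moreover have "p \<noteq> p0 \<Longrightarrow> length p < length p0" using shorter \<open>p \<in> S\<close> by blast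
    ultimately show "is_perm p \<and> 1 \<le> length p \<and> length p \<le> k"
      using perms unfolding k_def by (cases "p = p0") auto
  qed
  have k: "1 \<le> k" using p0 unfolding k_def by simp
  obtain C where C: "\<And>m b. m \<in> {1..k} \<Longrightarrow> b \<in> {1..k} \<Longrightarrow> comb_coeff S c k m b = C"
    using comb_coeff_const[OF fin perms' k const] by blast
  define b0 where "b0 = perm_app p0 1"
  have b0: "b0 \<in> {1..k}" using perm_app_in_range[of p0 1] perms p0 unfolding b0_def k_def by auto
  have "0 = (\<Sum>m\<in>{1..k}. alt_weight k m) * C" using sum_alt_weight p0 unfolding k_def by simp
  also have "\<dots> = (\<Sum>m\<in>{1..k}. alt_weight k m * comb_coeff S c k m b0)"
    unfolding sum_distrib_right using C b0 by (intro sum.cong) auto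
  also have "\<dots> = (\<Sum>m\<in>{1..k}. \<Sum>p\<in>S. c p * (alt_weight k m * perm_coeff p k m b0))"
    unfolding comb_coeff_def sum_distrib_left by (intro sum.cong refl) (simp add: mult_ac)
  also have "\<dots> = (\<Sum>p\<in>S. c p * (\<Sum>m\<in>{1..k}. alt_weight k m * perm_coeff p k m b0))"
    unfolding sum_distrib_left by (rule sum.swap)
  also have "\<dots> = c p0 * (\<Sum>m\<in>{1..k}. alt_weight k m * perm_coeff p0 k m b0)"
  proof -
    have "(\<Sum>p\<in>S - {p0}. c p * (\<Sum>m\<in>{1..k}. alt_weight k m * perm_coeff p k m b0)) = 0"
      by (rule sum.neutral) (use sum_alt_weight_perm_coeff_shorter shorter in \<open>auto simp: k_def\<close>)
    then show ?thesis by (simp add: sum.remove[OF fin p0(1)])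
  qed
  also have "\<dots> = c p0 * real k"
    using sum_alt_weight_perm_coeff_same_length[of p0 k] perms p0 unfolding b0_def k_def by simp
  finally show ?thesis using p0 unfolding k_def by auto
qed

lemma perm_indicator_comb_const_eq_0:
  fixes a :: "nat list \<Rightarrow> real"
  assumes fin: "finite S" and card: "card S < k"
    and h: "\<And>m b. m \<in> {1..k} \<Longrightarrow> b \<in> {1..k} \<Longrightarrow>
      (\<Sum>p\<in>S. a p * (if perm_app p m = b then 1 else 0)) = C"
  shows "C = 0"
proof -
  have "\<not> {1..k} \<subseteq> (\<lambda>p. perm_app p 1) ` S"
  proof
    assume "{1..k} \<subseteq> (\<lambda>p. perm_app p 1) ` S"
    then have "card {1..k} \<le> card S"
      using card_mono[OF finite_imageI[OF fin]] card_image_le[OF fin] le_trans by blast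
    then show False using card by simp
  qed
  then obtain b0 where b0: "b0 \<in> {1..k}" "b0 \<notin> (\<lambda>p. perm_app p 1) ` S" by blast
  then have "\<forall>p\<in>S. perm_app p 1 \<noteq> b0" by blast
  then show "C = 0" using h[of 1 b0] b0(1) card by simp
qed

text \<open>If some coefficient is nonzero, every entry of its permutation is shared by another
  permutation with nonzero coefficient; starting from a position where two of them differ
  this produces four distinct permutations.\<close>

lemma perm_indicators_indep:
  fixes a :: "nat list \<Rightarrow> real"
  assumes fin: "finite S" and card: "card S \<le> 3" and k: "1 \<le> k"
    and perms: "\<forall>p\<in>S. is_perm p \<and> length p = k"
    and h: "\<And>m b. m \<in> {1..k} \<Longrightarrow> b \<in> {1..k} \<Longrightarrow>
      (\<Sum>p\<in>S. a p * (if perm_app p m = b then 1 else 0)) = 0"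
  shows "\<forall>p\<in>S. a p = 0"
proof (rule ccontr)
  have partner: "\<exists>q\<in>S. q \<noteq> p \<and> a q \<noteq> 0 \<and> perm_app q m = perm_app p m"
    if p: "p \<in> S" "a p \<noteq> 0" and m: "m \<in> {1..k}" for p m
  proof (rule ccontr)
    assume none: "\<not> ?thesis"
    have "(\<Sum>q\<in>S - {p}. a q * (if perm_app q m = perm_app p m then 1 else 0)) = 0"
      using none by (intro sum.neutral) auto
    then have "(\<Sum>q\<in>S. a q * (if perm_app q m = perm_app p m then 1 else 0)) = a p"
      by (simp add: sum.remove[OF fin p(1)])
    moreover have "perm_app p m \<in> {1..k}" using perm_app_in_range[of p m] perms p m by auto
    ultimately show False using h[OF m] p(2) by simp
  qed
  assume "\<not> (\<forall>p\<in>S. a p = 0)"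
  then obtain p where p: "p \<in> S" "a p \<noteq> 0" by blast
  obtain q where q: "q \<in> S" "q \<noteq> p" "a q \<noteq> 0" using partner[OF p, of 1] k by auto
  have len: "length p = length q" "length p = k" using perms p q by auto
  obtain m where "m \<in> {1..length p}" "perm_app p m \<noteq> perm_app q m"
    by (rule perm_app_differ[OF len(1)]) (use q(2) in auto)
  then have m: "m \<in> {1..k}" "perm_app p m \<noteq> perm_app q m" using len(2) by auto
  obtain r where r: "r \<in> S" "r \<noteq> p" "perm_app r m = perm_app p m" using partner[OF p m(1)] by auto
  obtain s where s: "s \<in> S" "s \<noteq> q" "perm_app s m = perm_app q m" using partner[OF q(1,3) m(1)] by auto
  have "r \<noteq> q" "s \<noteq> p" "s \<noteq> r" using r(3) s(3) m(2) by auto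
  then have "card {p, q, r, s} = 4" using q(2) r(2) s(2) by simp
  moreover have "card {p, q, r, s} \<le> card S" using p q r s by (intro card_mono[OF fin]) auto
  ultimately show False using card by simp
qed

lemma equal_length_coeffs_eq_0:
  assumes fin: "finite S" and card: "card S \<le> 3" "card S < k"
    and perms: "\<forall>p\<in>S. is_perm p \<and> length p = k" and const: "const_on_square (comb_poly S c)"
  shows "\<forall>p\<in>S. c p = 0"
proof -
  have k: "1 \<le> k" using card by simp
  have "\<forall>p\<in>S. is_perm p \<and> 1 \<le> length p \<and> length p \<le> k" using perms k by auto
  then obtain C where C: "\<And>m b. m \<in> {1..k} \<Longrightarrow> b \<in> {1..k} \<Longrightarrow> comb_coeff S c k m b = C"
    using comb_coeff_const[OF fin _ k const] by blast
  have row: "(\<Sum>p\<in>S. c p * fact k * (if perm_app p m = b then 1 else 0)) = C"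
    if mb: "m \<in> {1..k}" "b \<in> {1..k}" for m b
  proof -
    have "comb_coeff S c k m b = (\<Sum>p\<in>S. c p * fact k * (if perm_app p m = b then 1 else 0))"
      unfolding comb_coeff_def using perm_coeff_same_length perms mb by (intro sum.cong) auto
    then show ?thesis using C[OF mb] by simp
  qed
  then have "C = 0" by (rule perm_indicator_comb_const_eq_0[OF fin card(2)])
  then have "\<forall>p\<in>S. c p * fact k = 0"
    using perm_indicators_indep[OF fin card(1) k perms, where a="\<lambda>p. c p * fact k"] row by simp
  then show ?thesis by simp
qed

lemma two_perm_coeffs_eq_0:
  assumes ne: "q1 \<noteq> q2" and perms: "is_perm q1" "is_perm q2"
    and len: "2 \<le> length q2" "length q2 \<le> length q1" "3 \<le> length q1"
    and const: "const_on_square (comb_poly {q1, q2} c)"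
  shows "c q1 = 0 \<and> c q2 = 0"
proof (cases "length q2 < length q1")
  case True
  have c1: "c q1 = 0"
  proof (rule longest_perm_coeff_eq_0[OF _ _ _ _ _ const])
    show "\<forall>p\<in>{q1, q2}. is_perm p \<and> 1 \<le> length p" using perms len by auto
    show "\<forall>p\<in>{q1, q2} - {q1}. length p < length q1" using True by simp
  qed (use len in simp_all)
  have "{q1, q2} - {q1} = {q2}" using ne by auto
  then have "const_on_square (comb_poly {q2} c)"
    using const comb_poly_remove[of "{q1, q2}" c q1] c1 by simp
  then have "\<forall>p\<in>{q2}. c p = 0"
    by (rule equal_length_coeffs_eq_0[rotated 4]) (use perms len in simp_all)
  with c1 show ?thesis by simp
next
  case False
  then have "\<forall>p\<in>{q1, q2}. c p = 0"
    by (intro equal_length_coeffs_eq_0[OF _ _ _ _ const, of "length q1"]) (use ne perms len in auto)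
  then show ?thesis by simp
qed

lemma elev_eq:
  "z \<le> b \<Longrightarrow> b \<le> z + (k - k') \<Longrightarrow>
    elev k k' b z = real ((k-k') choose (b-z)) * fact (b-1) * fact (k-b) / (fact (z-1) * fact (k'-z))"
  by (simp add: elev_def)

lemma elev_2_at_1: assumes "1 \<le> b" "b < k" shows "elev k 2 b 1 = fact (k-2) * real (k-b)"
proof -
  have "elev k 2 b 1 = real ((k-2) choose (b-1)) * fact (b-1) * fact (k-b)"
    using assms by (simp add: elev_def)
  also have "real ((k-2) choose (b-1)) = fact (k-2) / (fact (b-1) * fact (k-2-(b-1)))"
    by (rule binomial_fact) (use assms in simp)
  also have "k-2-(b-1) = k-b-1" using assms by simp
  also have "fact (k-b) = real (k-b) * (fact (k-b-1) :: real)" using assms by (intro fact_reduce) simp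
  finally show ?thesis by simp
qed

lemma elev_2_at_2: assumes "2 \<le> b" "b \<le> k" shows "elev k 2 b 2 = fact (k-2) * real (b-1)"
proof -
  have "elev k 2 b 2 = real ((k-2) choose (b-2)) * fact (b-1) * fact (k-b)"
    using assms by (simp add: elev_def)
  also have "real ((k-2) choose (b-2)) = fact (k-2) / (fact (b-2) * fact (k-2-(b-2)))"
    by (rule binomial_fact) (use assms in simp)
  also have "k-2-(b-2) = k-b" using assms by simp
  also have "fact (b-1) = real (b-1) * (fact (b-2) :: real)"
    using assms fact_reduce[of "b-1", where 'a=real] by (simp add: numeral_2_eq_2)
  finally show ?thesis by simp
qed

lemma elev_3_at_1:
  assumes "k \<ge> 4"
  shows "elev k 3 1 1 = real (k-1) * fact (k-2) / 2" "elev k 3 2 1 = real (k-3) * fact (k-2) / 2"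
proof -
  have "elev k 3 1 1 = real ((k-3) choose 0) * fact 0 * fact (k-1) / (fact 0 * fact 2)"
    using elev_eq[of 1 1 k 3] assms by simp
  also have "fact (k-1) = real (k-1) * (fact (k-2) :: real)"
    using assms fact_reduce[of "k-1", where 'a=real] by (simp add: numeral_2_eq_2)
  finally show "elev k 3 1 1 = real (k-1) * fact (k-2) / 2" by simp
  have "elev k 3 2 1 = real ((k-3) choose 1) * fact 1 * fact (k-2) / (fact 0 * fact 2)"
    using elev_eq[of 1 2 k 3] assms by simp
  then show "elev k 3 2 1 = real (k-3) * fact (k-2) / 2" by simp
qed

lemma elev_3_at_2:
  assumes "k \<ge> 4"
  shows "elev k 3 2 2 = fact (k-2)" "elev k 3 3 2 = 2 * real (k-3) * fact (k-3)"
proof -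
  show "elev k 3 2 2 = fact (k-2)"
    using elev_eq[of 2 2 k 3] assms by simp
  have "elev k 3 3 2 = real ((k-3) choose 1) * fact 2 * fact (k-3) / (fact 1 * fact 1)"
    using elev_eq[of 2 3 k 3] assms by simp
  then show "elev k 3 3 2 = 2 * real (k-3) * fact (k-3)" by simp
qed

lemma elev_3_at_3:
  assumes "k \<ge> 4"
  shows "elev k 3 k 3 = real (k-1) * fact (k-2) / 2" "elev k 3 (k-1) 3 = real (k-3) * fact (k-2) / 2"
proof -
  have "elev k 3 k 3 = real ((k-3) choose (k-3)) * fact (k-1) * fact 0 / (fact 2 * fact 0)"
    using elev_eq[of 3 k k 3] assms by simp
  also have "fact (k-1) = real (k-1) * (fact (k-2) :: real)"
    using assms fact_reduce[of "k-1", where 'a=real] by (simp add: numeral_2_eq_2)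
  finally show "elev k 3 k 3 = real (k-1) * fact (k-2) / 2" by simp
  obtain n where n: "k = 4 + n" using assms by (auto dest: le_Suc_ex)
  have e: "k - 1 - 3 = n" "k - (k - 1) = 1" "k - 1 - 1 = k - 2" "k - 3 = Suc n" using n by auto
  have "elev k 3 (k-1) 3 = real ((k-3) choose (k-1-3)) * fact (k-1-1) * fact (k-(k-1)) / (fact 2 * fact 0)"
    using elev_eq[of 3 "k-1" k 3] assms by simp
  also have "(k-3) choose (k-1-3) = k - 3" unfolding e by (rule binomial_Suc_n)
  finally show "elev k 3 (k-1) 3 = real (k-3) * fact (k-2) / 2" unfolding e by simp
qed

lemma exists_two_avoiding_pair:
  fixes u v w :: nat
  assumes "t \<in> {x, y}" "t \<notin> {u, v, w}" "u < v" "v < w"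
  obtains b1 b2 where "b1 \<in> {u, v, w}" "b2 \<in> {u, v, w}" "b1 < b2" "b1 \<notin> {x, y}" "b2 \<notin> {x, y}"
proof -
  define s where "s = (if x = t then y else x)"
  have avoid: "b \<notin> {x, y}" if "b \<noteq> t" "b \<noteq> s" for b
    using assms(1) that unfolding s_def by auto
  consider "s = u" | "s = v" | "s \<noteq> u" "s \<noteq> v" by blast
  then show ?thesis
  proof cases
    case 1
    show ?thesis by (rule that[of v w]; (rule avoid)?) (use 1 assms(2-4) in auto)
  next
    case 2
    show ?thesis by (rule that[of u w]; (rule avoid)?) (use 2 assms(2-4) in auto)
  next
    case 3
    show ?thesis by (rule that[of u v]; (rule avoid)?) (use 3 assms(2-4) in auto)
  qed
qed

lemma elev_2_not_const_off_two_points: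
  assumes k: "4 \<le> k" and z: "z = 1 \<or> z = 2" and C: "C \<noteq> 0"
    and h: "\<forall>b\<in>{1..k} - {x, y}. elev k 2 b z = C"
  shows False
  using z
proof
  assume z1: "z = 1"
  have "elev k 2 k 1 = 0" using k by (intro elev_eq_0) simp
  then have "k \<in> {x, y}" using h C z1 k by fastforce
  then obtain b1 b2 where b: "b1 \<in> {1, 2, 3}" "b2 \<in> {1, 2, 3}" "b1 < b2" "b1 \<notin> {x, y}" "b2 \<notin> {x, y}"
    by (rule exists_two_avoiding_pair[where u=1 and v=2 and w=3]) (use k in auto)
  then have "elev k 2 b1 1 = elev k 2 b2 1" using h z1 k by auto
  moreover have r: "1 \<le> b1" "b1 < k" "1 \<le> b2" "b2 < k" using b k by auto
  ultimately have "fact (k-2) * real (k - b1) = fact (k-2) * real (k - b2)"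
    using elev_2_at_1[of b1 k] elev_2_at_1[of b2 k] by simp
  then have "k - b1 = k - b2" by simp
  then show False using b(3) r by linarith
next
  assume z2: "z = 2"
  have "elev k 2 1 2 = 0" by (intro elev_eq_0) simp
  then have "1 \<in> {x, y}" using h C z2 k by fastforce
  then obtain b1 b2 where b: "b1 \<in> {k-2, k-1, k}" "b2 \<in> {k-2, k-1, k}" "b1 < b2" "b1 \<notin> {x, y}" "b2 \<notin> {x, y}"
    by (rule exists_two_avoiding_pair[where u="k-2" and v="k-1" and w=k]) (use k in auto)
  then have "elev k 2 b1 2 = elev k 2 b2 2" using h z2 k by auto
  moreover have r: "2 \<le> b1" "b1 \<le> k" "2 \<le> b2" "b2 \<le> k" using b k by auto
  ultimately have "fact (k-2) * real (b1 - 1) = fact (k-2) * real (b2 - 1)"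
    using elev_2_at_2[of b1 k] elev_2_at_2[of b2 k] by simp
  then have "b1 - 1 = b2 - 1" by simp
  then show False using b(3) r by linarith
qed

lemma elev_3_const_off_two_points:
  assumes k: "4 \<le> k" and z: "1 \<le> z" "z \<le> 3" and C: "C \<noteq> 0"
    and h: "\<forall>b\<in>{1..k} - {x, y}. elev k 3 b z = C"
  shows "k = 4 \<and> z = 2"
proof -
  have off: "b \<in> {x, y}" if "b \<in> {1..k}" "\<not> (z \<le> b \<and> b \<le> z + (k - 3))" for b
    using h elev_eq_0[OF that(2)] C that(1) by auto
  have fpos: "fact (k-2) > (0::real)" "fact (k-3) > (0::real)" by auto
  consider "z = 1" | "z = 2" | "z = 3" using z by linarith
  then show ?thesis
  proof cases
    case 1
    then have "k - 1 \<in> {x, y}" "k \<in> {x, y}" using off[of "k-1"] off[of k] k by auto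
    then have "1 \<notin> {x, y}" "2 \<notin> {x, y}" using k by auto
    then have "elev k 3 1 1 = elev k 3 2 1" using h 1 k by auto
    then have "real (k-1) = real (k-3)" using elev_3_at_1[OF k] fpos by simp
    then show ?thesis using k by simp
  next
    case 3
    then have "1 \<in> {x, y}" "2 \<in> {x, y}" using off[of 1] off[of 2] k by auto
    then have "k \<notin> {x, y}" "k - 1 \<notin> {x, y}" using k by auto
    then have "elev k 3 k 3 = elev k 3 (k-1) 3" using h 3 k by auto
    then have "real (k-1) = real (k-3)" using elev_3_at_3[OF k] fpos by simp
    then show ?thesis using k by simp
  next
    case 2
    then have "1 \<in> {x, y}" "k \<in> {x, y}" using off[of 1] off[of k] k by auto
    then have "2 \<notin> {x, y}" "3 \<notin> {x, y}" using k by auto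
    then have "elev k 3 2 2 = elev k 3 3 2" using h 2 k by auto
    then have e: "fact (k-2) = 2 * real (k-3) * fact (k-3)" using elev_3_at_2[OF k] by simp
    have "Suc (k - 3) = k - 2" using k by arith
    then have "fact (k-2) = real (k-2) * (fact (k-3) :: real)"
      using fact_Suc[of "k-3", where 'a=real] by metis
    with e fpos(2) have "real (k-2) = 2 * real (k-3)" by simp
    then have "k = 4" using k by (simp add: of_nat_diff)
    then show ?thesis using 2 by simp
  qed
qed

text \<open>The hypotheses below describe a row of the coefficient matrix when
  \<open>|\<pi>\<^sub>1| = |\<pi>\<^sub>2| > |\<pi>\<^sub>3|\<close>: away from the entries \<open>x\<close>, \<open>y\<close> of \<open>\<pi>\<^sub>1\<close> and \<open>\<pi>\<^sub>2\<close> it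
  is a multiple of a column of \<open>elev\<close>.\<close>

lemma elev_const_off_two_points:
  assumes k: "4 \<le> k" "2 \<le> k'" "k' < k" and z: "1 \<le> z" "z \<le> k'" and C: "C \<noteq> 0"
    and h: "\<forall>b\<in>{1..k} - {x, y}. elev k k' b z = C"
  shows "k = 4 \<and> k' = 3 \<and> z = 2"
proof -
  have "{1..k} - {z..z + (k - k')} \<subseteq> {x, y}"
    using h elev_eq_0 C by fastforce
  then have "card ({1..k} - {z..z + (k - k')}) \<le> card {x, y}" by (intro card_mono) auto
  also have "\<dots> \<le> 2" by (cases "x = y") auto
  also have "card ({1..k} - {z..z + (k - k')}) = k' - 1"
    using z k by (subst card_Diff_subset) auto
  finally have "k' \<le> 3" by simp
  then consider "k' = 2" | "k' = 3" using k by linarith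
  then show ?thesis
  proof cases
    case 1
    have "z = 1 \<or> z = 2" using z 1 by auto
    then have False using elev_2_not_const_off_two_points[OF k(1) _ C] h 1 by auto
    then show ?thesis ..
  next
    case 2
    then show ?thesis using elev_3_const_off_two_points[OF k(1) _ _ C] h z by auto
  qed
qed

lemma elev_vanishing_off_two_points:
  assumes z: "1 \<le> z" "z \<le> k'" "k' \<le> k" and h: "\<forall>b\<in>{1..k} - {x, y}. elev k k' b z = 0"
  shows "k \<le> k' + 1"
proof (rule ccontr)
  assume "\<not> k \<le> k' + 1"
  then have "b \<in> {x, y}" if "b \<in> {z, z+1, z+2}" for b
    using h elev_pos[of z b k k'] that z by force
  then have "{z, z+1, z+2} \<subseteq> {x, y}" by blast
  then show False by auto
qed

lemma elev_second_row_not_vanishing_off_two_points: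
  assumes k: "k = k' + 1" "4 \<le> k" and z: "1 \<le> z1" "z1 \<le> k'" "1 \<le> z2" "z2 \<le> k'" "z1 \<noteq> z2"
    and h: "\<forall>b\<in>{1..k} - {x, y}. elev k k' b z1 + real (k-2) * elev k k' b z2 = 0"
  shows False
proof -
  have "b \<in> {x, y}" if "b \<in> {z1, z1+1, z2, z2+1}" for b
  proof (rule ccontr)
    assume b: "b \<notin> {x, y}"
    have "0 < elev k k' b z1 \<or> 0 < elev k k' b z2" using elev_pos that k by auto
    moreover have "0 \<le> elev k k' b z1" "0 \<le> elev k k' b z2" "0 < real (k-2)"
      using elev_nonneg k by auto
    ultimately have "0 < elev k k' b z1 + real (k-2) * elev k k' b z2"
      by (metis add_nonneg_pos add_pos_nonneg mult_pos_pos mult_nonneg_nonneg less_imp_le)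
    moreover have "b \<in> {1..k}" using that z k by auto
    ultimately show False using h b by auto
  qed
  then have "{z1, z1+1, z2, z2+1} \<subseteq> {x, y}" by blast
  then show False using z(5) by auto
qed

lemma shorter_perm_first_last_rows:
  assumes q: "is_perm q" "length q = k'" and kk: "4 \<le> k" "2 \<le> k'" "k' < k" and a: "a \<noteq> 0"
    and h: "\<And>m b. m \<in> {1..k} \<Longrightarrow> b \<in> {1..k} - {x m, y m} \<Longrightarrow> a * perm_coeff q k m b = C"
  shows "C = 0 \<and> k = k' + 1"
proof -
  have kk': "1 \<le> k'" "k' \<le> k" using kk by auto
  define \<gamma> where "\<gamma> = a * fact k' * (fact (k-1) / fact (k'-1))"
  have \<gamma>: "\<gamma> \<noteq> 0" using a unfolding \<gamma>_def by simp
  have row: "\<forall>b\<in>{1..k} - {x m, y m}. elev k k' b (perm_app q j) = C / \<gamma>"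
    if m: "m \<in> {1..k}"
      and coeff: "\<And>b. perm_coeff q k m b = fact k' * (fact (k-1) / fact (k'-1)) * elev k k' b (perm_app q j)"
    for m j
  proof
    fix b assume b: "b \<in> {1..k} - {x m, y m}"
    have "\<gamma> * elev k k' b (perm_app q j) = a * perm_coeff q k m b"
      unfolding \<gamma>_def coeff by (simp only: mult.assoc)
    then show "elev k k' b (perm_app q j) = C / \<gamma>" using h[OF m b] \<gamma> by (simp add: field_simps)
  qed
  have first: "\<forall>b\<in>{1..k} - {x 1, y 1}. elev k k' b (perm_app q 1) = C / \<gamma>"
    using row[of 1 1, OF _ perm_coeff_first_row[OF q kk']] kk by simp
  have last: "\<forall>b\<in>{1..k} - {x k, y k}. elev k k' b (perm_app q k') = C / \<gamma>"
    using row[of k k', OF _ perm_coeff_last_row[OF q kk']] kk by simp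
  have z1: "1 \<le> perm_app q 1" "perm_app q 1 \<le> k'" and zk: "1 \<le> perm_app q k'" "perm_app q k' \<le> k'"
    using perm_app_in_range[OF q(1), of 1] perm_app_in_range[OF q(1), of k'] q(2) kk by auto
  have C0: "C = 0"
  proof (rule ccontr)
    assume "C \<noteq> 0"
    then have nz: "C / \<gamma> \<noteq> 0" using \<gamma> by simp
    have "perm_app q 1 = 2" "perm_app q k' = 2"
      using elev_const_off_two_points[OF kk z1 nz first] elev_const_off_two_points[OF kk zk nz last]
      by blast+
    then have "perm_app q 1 = perm_app q k'" by simp
    then show False using inj_onD[OF inj_on_perm_app[OF q(1)], of 1 k'] q(2) kk by auto
  qed
  then have "\<forall>b\<in>{1..k} - {x 1, y 1}. elev k k' b (perm_app q 1) = 0" using first by simp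
  then have "k \<le> k' + 1" by (rule elev_vanishing_off_two_points[OF z1 kk'(2)])
  then show ?thesis using C0 kk by simp
qed

text \<open>A combination of two permutation matrices of size \<open>k\<close> and an elevated shorter
  permutation is constant only if the shorter one does not occur.\<close>

lemma shorter_perm_rows_const_imp_0:
  assumes q: "is_perm q" "2 \<le> length q" "length q < k" "4 \<le> k"
    and h: "\<And>m b. m \<in> {1..k} \<Longrightarrow> b \<in> {1..k} - {x m, y m} \<Longrightarrow> a * perm_coeff q k m b = C"
  shows "a = 0"
proof (rule ccontr)
  assume a: "a \<noteq> 0"
  define k' where "k' = length q"
  have kk: "4 \<le> k" "2 \<le> k'" "k' < k" using q unfolding k'_def by auto
  have C0: "C = 0" and k: "k = k' + 1"
    using shorter_perm_first_last_rows[OF q(1) k'_def[symmetric] kk a h] by auto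
  have z1: "1 \<le> perm_app q 1" "perm_app q 1 \<le> k'" and z2: "1 \<le> perm_app q 2" "perm_app q 2 \<le> k'"
    using perm_app_in_range[OF q(1), of 1] perm_app_in_range[OF q(1), of 2] kk unfolding k'_def by auto
  have "perm_app q 1 \<noteq> perm_app q 2"
    using inj_onD[OF inj_on_perm_app[OF q(1)], of 1 2] kk unfolding k'_def by auto
  moreover have "\<forall>b\<in>{1..k} - {x 2, y 2}.
      elev k k' b (perm_app q 1) + real (k-2) * elev k k' b (perm_app q 2) = 0"
    using h[of 2] perm_coeff_second_row[OF q(1) k'_def[symmetric] k kk(2)] kk a C0 by auto
  ultimately show False
    using elev_second_row_not_vanishing_off_two_points[OF k kk(1) z1 z2] by blast
qed

lemma top_two_equal_coeffs_eq_0: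
  assumes ne: "q1 \<noteq> q2" "q1 \<noteq> q3" "q2 \<noteq> q3"
    and perms: "is_perm q1" "is_perm q2" "is_perm q3"
    and len: "length q1 = k" "length q2 = k" "2 \<le> length q3" "length q3 \<le> k" "4 \<le> k"
    and const: "const_on_square (comb_poly {q1, q2, q3} c)"
  shows "c q1 = 0 \<and> c q2 = 0 \<and> c q3 = 0"
proof (cases "length q3 = k")
  case True
  have "\<forall>p\<in>{q1, q2, q3}. c p = 0"
    by (rule equal_length_coeffs_eq_0[OF _ _ _ _ const, of k]) (use ne perms len True in auto)
  then show ?thesis by simp
next
  case False
  obtain C where C: "\<And>m b. m \<in> {1..k} \<Longrightarrow> b \<in> {1..k} \<Longrightarrow> comb_coeff {q1, q2, q3} c k m b = C"
    by (rule comb_coeff_const[OF _ _ _ const, of k]) (use perms len in auto)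
  have rows: "c q3 * perm_coeff q3 k m b = C"
    if m: "m \<in> {1..k}" and b: "b \<in> {1..k} - {perm_app q1 m, perm_app q2 m}" for m b
  proof -
    have "comb_coeff {q1, q2, q3} c k m b
        = c q1 * perm_coeff q1 k m b + c q2 * perm_coeff q2 k m b + c q3 * perm_coeff q3 k m b"
      using ne by (simp add: comb_coeff_def)
    moreover have "perm_coeff q1 k m b = 0" "perm_coeff q2 k m b = 0"
      using perm_coeff_same_length[of _ k m b] perms len m b by auto
    ultimately show ?thesis using C[of m b] m b by simp
  qed
  have c3: "c q3 = 0"
    by (rule shorter_perm_rows_const_imp_0[OF perms(3) _ _ _ rows]) (use len False in auto)
  have "{q1, q2, q3} - {q3} = {q1, q2}" using ne by auto
  then have "const_on_square (comb_poly {q1, q2} c)"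
    using const comb_poly_remove[of "{q1, q2, q3}" c q3] c3 by simp
  then have "\<forall>p\<in>{q1, q2}. c p = 0"
    by (rule equal_length_coeffs_eq_0[rotated 4]) (use ne perms len in auto)
  with c3 show ?thesis by simp
qed

theorem lemma13:
  fixes p1 p2 p3 :: "nat list"
  assumes "nontrivial_perm p1" and "nontrivial_perm p2" and "nontrivial_perm p3"
    and "p1 \<noteq> p2" and "p1 \<noteq> p3" and "p2 \<noteq> p3"
    and "lin_dependent_perms {p1, p2, p3}"
    and "perm_order p1 \<ge> perm_order p2" and "perm_order p2 \<ge> perm_order p3"
    and "perm_order p1 > 3"
  shows "perm_order p2 = 2 \<and> perm_order p3 = 2"
proof (rule ccontr)
  assume not_both_2: "\<not> ?thesis"
  note ne = assms(4-6)
  have perms: "is_perm p1" "is_perm p2" "is_perm p3"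
    and len: "2 \<le> length p3" "length p3 \<le> length p2" "length p2 \<le> length p1" "4 \<le> length p1"
    using assms(1-3,8-10) unfolding nontrivial_perm_def perm_order_def by auto
  obtain c where nz: "\<exists>p\<in>{p1, p2, p3}. c p \<noteq> 0"
    and rel: "\<forall>x y. 0 < x \<and> x < 1 \<and> 0 < y \<and> y < 1 \<longrightarrow> (\<Sum>p\<in>{p1, p2, p3}. c p * grad_poly p x y) = 0"
    using assms(7) unfolding lin_dependent_perms_def by blast
  have const: "const_on_square (comb_poly {p1, p2, p3} c)"
    by (rule comb_poly_const_on_square) (use perms len rel in auto)
  have "c p1 = 0 \<and> c p2 = 0 \<and> c p3 = 0"
  proof (cases "length p2 < length p1")
    case True
    have c1: "c p1 = 0"
      by (rule longest_perm_coeff_eq_0[OF _ _ _ _ _ const]) (use perms len True in auto)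
    have "{p1, p2, p3} - {p1} = {p2, p3}" using ne by auto
    then have "const_on_square (comb_poly {p2, p3} c)"
      using const comb_poly_remove[of "{p1, p2, p3}" c p1] c1 by simp
    moreover have "3 \<le> length p2" using not_both_2 len unfolding perm_order_def by auto
    ultimately have "c p2 = 0 \<and> c p3 = 0"
      using two_perm_coeffs_eq_0[OF ne(3) perms(2,3) len(1,2)] by blast
    with c1 show ?thesis by simp
  next
    case False
    then show ?thesis using top_two_equal_coeffs_eq_0[OF ne perms refl _ _ _ _ const] len by simp
  qed
  with nz show False by auto
qed

end
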